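(* Fix a right-censored data set $\{(y_i,\delta_i)\}_{i=1}^n$ with no ties. For every failure time $t$ (i.e. $t=y_i$ for some $i$ with $\delta_i=1$), $E^*[S^L(t)]\le\tilde S(t)\le E^*[S^U(t)]$, where $E^*$ is expectation under the fiducial probability and $\tilde S(t)=\prod_{u\le t}\{1-\Delta\bar N(u)/\bar K(u)\}$ is the Kaplan–Meier estimator.
   Context: $\bar N(s)=\sum_i I\{y_i\le s\}\delta_i$, $\bar K(s)=\sum_i I\{y_i\ge s\}$, $\Delta\bar N(s)=\bar N(s)-\bar N(s-)$. For $u\in(0,1)^n$ let $Q^F(u)$ be the set of distribution functions $F$ on $[0,\infty)$ with $F(y_i)\ge u_i$ and $F(y_i-\varepsilon)<u_i$ for all $\varepsilon>0$ whenever $\delta_i=1$, and $F(y_j)<u_j$ whenever $\delta_j=0$. Under the fiducial probability, $U^*$ is i.i.d. $U(0,1)^n$ conditioned on $Q^F(U^* )\neq\emptyset$; $S^U(s)=1-\inf\{F(s):F\in Q^F(U^* )\}$ and $S^L(s)=1-\sup\{F(s):F\in Q^F(U^* )\}$. *)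

theory Defs
  imports "HOL-Probability.Probability"
begin

text \<open>Data: n observations y i (i < n) with censoring indicators delta i
  (True = failure observed, i.e. delta_i = 1).\<close>

definition Nbar :: "nat \<Rightarrow> (nat \<Rightarrow> real) \<Rightarrow> (nat \<Rightarrow> bool) \<Rightarrow> real \<Rightarrow> real" where
  "Nbar n y \<delta> s = (\<Sum>i<n. if y i \<le> s \<and> \<delta> i then 1 else 0)"

definition Nbar_left :: "nat \<Rightarrow> (nat \<Rightarrow> real) \<Rightarrow> (nat \<Rightarrow> bool) \<Rightarrow> real \<Rightarrow> real" where
  "Nbar_left n y \<delta> s = (\<Sum>i<n. if y i < s \<and> \<delta> i then 1 else 0)"

definition Kbar :: "nat \<Rightarrow> (nat \<Rightarrow> real) \<Rightarrow> real \<Rightarrow> real" where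
  "Kbar n y s = (\<Sum>i<n. if y i \<ge> s then 1 else 0)"

definition dNbar :: "nat \<Rightarrow> (nat \<Rightarrow> real) \<Rightarrow> (nat \<Rightarrow> bool) \<Rightarrow> real \<Rightarrow> real" where
  "dNbar n y \<delta> s = Nbar n y \<delta> s - Nbar_left n y \<delta> s"

text \<open>Kaplan--Meier estimator: product over u \<le> t of (1 - dN(u)/K(u)); factors
  are 1 unless u is an observation time, so the product ranges over the
  (finitely many) observation times u \<le> t.\<close>
definition KM :: "nat \<Rightarrow> (nat \<Rightarrow> real) \<Rightarrow> (nat \<Rightarrow> bool) \<Rightarrow> real \<Rightarrow> real" where
  "KM n y \<delta> t = (\<Prod>u\<in>{u \<in> y ` {..<n}. u \<le> t}. 1 - dNbar n y \<delta> u / Kbar n y u)"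

definition is_dist_fun_nonneg :: "(real \<Rightarrow> real) \<Rightarrow> bool" where
  "is_dist_fun_nonneg F \<longleftrightarrow> mono F \<and> (\<forall>x. continuous (at_right x) F)
     \<and> (F \<longlongrightarrow> 1) at_top \<and> (\<forall>x<0. F x = 0)"

definition QF :: "nat \<Rightarrow> (nat \<Rightarrow> real) \<Rightarrow> (nat \<Rightarrow> bool) \<Rightarrow> (nat \<Rightarrow> real) \<Rightarrow> (real \<Rightarrow> real) set" where
  "QF n y \<delta> u = {F. is_dist_fun_nonneg F \<and>
     (\<forall>i<n. \<delta> i \<longrightarrow> F (y i) \<ge> u i \<and> (\<forall>\<epsilon>>0. F (y i - \<epsilon>) < u i)) \<and>
     (\<forall>j<n. \<not> \<delta> j \<longrightarrow> F (y j) < u j)}"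

definition S_upper :: "nat \<Rightarrow> (nat \<Rightarrow> real) \<Rightarrow> (nat \<Rightarrow> bool) \<Rightarrow> (nat \<Rightarrow> real) \<Rightarrow> real \<Rightarrow> real" where
  "S_upper n y \<delta> u s = 1 - Inf ((\<lambda>F. F s) ` QF n y \<delta> u)"

definition S_lower :: "nat \<Rightarrow> (nat \<Rightarrow> real) \<Rightarrow> (nat \<Rightarrow> bool) \<Rightarrow> (nat \<Rightarrow> real) \<Rightarrow> real \<Rightarrow> real" where
  "S_lower n y \<delta> u s = 1 - Sup ((\<lambda>F. F s) ` QF n y \<delta> u)"

definition unif_cube :: "nat \<Rightarrow> (nat \<Rightarrow> real) measure" where
  "unif_cube n = PiM {..<n} (\<lambda>_. uniform_measure lborel {0<..<1})"

definition fiducial :: "nat \<Rightarrow> (nat \<Rightarrow> real) \<Rightarrow> (nat \<Rightarrow> bool) \<Rightarrow> (nat \<Rightarrow> real) measure" where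
  "fiducial n y \<delta> = uniform_measure (unif_cube n)
      {u \<in> space (unif_cube n). QF n y \<delta> u \<noteq> {}}"

end

theory Submission
  imports Defs
begin

text \<open>The fiducial set Q^F(u) is nonempty exactly when u is admissible: every coordinate is
  positive, failure coordinates are at most 1, and the coordinate of a failure is smaller than the
  coordinates of all later observations. Fixing the coordinate of the earliest observation shows
  that the admissible set has volume \<Prod> 1/K(y_i), the product over failures of the reciprocal
  numbers at risk. At a failure time t = y_m the upper fiducial survival function equals 1 - u_m,
  and the lower one is at most 1 - min(1, u_q : y_q > t). Adding a phantom observation just after
  t, censored respectively failed, turns the integrals of these functions over the admissible set
  into volumes of larger admissible sets. This gives E*[S^U(t)] = \<Prod> K/(K+1) and
  E*[S^L(t)] \<le> (1 - 1/K(t)) \<Prod> K/(K+1), products over the failures up to t. The Kaplan--Meier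
  estimate \<Prod> (1 - 1/K) lies in between: 1 - 1/K \<le> K/(K+1) termwise, and the lower bound
  telescopes because the numbers at risk at successive failures strictly decrease.\<close>

section \<open>Uniform measures\<close>

lemma nn_integral_uniform_measure_eq_divide:
  assumes "A \<in> sets M" "emeasure M A = ennreal c" "0 < c" "f \<in> borel_measurable M"
    "(\<integral>\<^sup>+x. ennreal (f x) * indicator A x \<partial>M) = ennreal d" "0 \<le> d"
  shows "(\<integral>\<^sup>+x. ennreal (f x) \<partial>uniform_measure M A) = ennreal (d / c)"
  using assms by (subst nn_integral_uniform_measure) (auto simp: divide_ennreal)

lemma integral_uniform_measure_eq:
  assumes "A \<in> sets M" "emeasure M A = ennreal c" "0 < c" "f \<in> borel_measurable M"
    "\<And>x. x \<in> A \<Longrightarrow> 0 \<le> f x"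
    "(\<integral>\<^sup>+x. ennreal (f x) * indicator A x \<partial>M) = ennreal d" "0 \<le> d"
  shows "(\<integral>x. f x \<partial>uniform_measure M A) = d / c"
proof -
  have "(\<integral>x. f x \<partial>uniform_measure M A) = enn2real (\<integral>\<^sup>+x. ennreal (f x) \<partial>uniform_measure M A)"
    using assms(1,4,5) by (intro integral_eq_nn_integral AE_uniform_measureI) auto
  then show ?thesis
    using nn_integral_uniform_measure_eq_divide[OF assms(1-4,6,7)] assms(3,7) by simp
qed

lemma integral_uniform_measure_le:
  assumes "A \<in> sets M" "emeasure M A = ennreal c" "0 < c" "f \<in> borel_measurable M"
    "\<And>x. x \<in> A \<Longrightarrow> 0 \<le> g x" "\<And>x. x \<in> A \<Longrightarrow> g x \<le> f x"
    "(\<integral>\<^sup>+x. ennreal (f x) * indicator A x \<partial>M) = ennreal d" "0 \<le> d"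
  shows "(\<integral>x. g x \<partial>uniform_measure M A) \<le> d / c"
proof (cases "integrable (uniform_measure M A) g")
  case True
  have "(\<integral>x. g x \<partial>uniform_measure M A) = enn2real (\<integral>\<^sup>+x. ennreal (g x) \<partial>uniform_measure M A)"
    using True assms(1,5) by (intro integral_eq_nn_integral AE_uniform_measureI) auto
  also have "\<dots> \<le> enn2real (\<integral>\<^sup>+x. ennreal (f x) \<partial>uniform_measure M A)"
    using assms(1,5,6) nn_integral_uniform_measure_eq_divide[OF assms(1-4,7,8)]
    by (intro enn2real_mono nn_integral_mono_AE AE_uniform_measureI) (auto intro: ennreal_leI)
  finally show ?thesis
    using nn_integral_uniform_measure_eq_divide[OF assms(1-4,7,8)] assms(3,8) by simp
qed (use assms(3,8) in \<open>simp add: not_integrable_integral_eq\<close>)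

abbreviation unif01 :: "real measure" where
  "unif01 \<equiv> uniform_measure lborel {0<..<1::real}"

abbreviation unif_prod :: "nat set \<Rightarrow> (nat \<Rightarrow> real) measure" where
  "unif_prod J \<equiv> PiM J (\<lambda>_. unif01)"

lemma prob_space_unif01: "prob_space unif01"
  by (intro prob_space_uniform_measure) auto

interpretation unif01: product_sigma_finite "\<lambda>_::nat. unif01"
proof -
  interpret prob_space unif01 by (rule prob_space_unif01)
  show "product_sigma_finite (\<lambda>_::nat. unif01)"
    unfolding product_sigma_finite_def by (auto intro: sigma_finite_measure_axioms)
qed

lemma AE_unif01: "AE z in unif01. 0 < z \<and> z < 1"
  by (rule AE_uniform_measureI) auto

lemma nn_integral_unif01_interval:
  assumes "0 \<le> a" "a \<le> b" "b \<le> 1"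
  shows "(\<integral>\<^sup>+z. indicator {a<..<b} z \<partial>unif01) = ennreal (b - a)"
  using assms by (subst nn_integral_indicator) (auto simp: Int_absorb1 divide_ennreal_def)

lemma nn_integral_unif01_power:
  fixes c L :: real and k :: nat
  assumes "0 \<le> L" "L \<le> 1" "0 \<le> c"
  shows "(\<integral>\<^sup>+z. indicator {L<..} z * ennreal (c * (1 - z) ^ k) \<partial>unif01)
         = ennreal (c * (1 - L) ^ Suc k / Suc k)"
proof -
  have "(\<integral>\<^sup>+z. indicator {L<..} z * ennreal (c * (1 - z) ^ k) \<partial>unif01)
     = (\<integral>\<^sup>+z. indicator {L<..} z * ennreal (c * (1 - z) ^ k) * indicator {0<..<1} z \<partial>lborel)"
    by (subst nn_integral_uniform_measure) (auto simp: divide_ennreal_def)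
  also have "\<dots> = (\<integral>\<^sup>+z. ennreal (c * (1 - z) ^ k) * indicator {L..1} z \<partial>lborel)"
  proof (rule nn_integral_cong_AE)
    show "AE z in lborel. indicator {L<..} z * ennreal (c * (1 - z) ^ k) * indicator {0<..<1} z
           = ennreal (c * (1 - z) ^ k) * indicator {L..1} z"
      using AE_lborel_singleton[of L] AE_lborel_singleton[of 1]
      by eventually_elim (use assms in \<open>auto simp: indicator_def\<close>)
  qed
  also have "\<dots> = ennreal ((- (c * (1 - 1) ^ Suc k / Suc k)) - (- (c * (1 - L) ^ Suc k / Suc k)))"
  proof (rule nn_integral_FTC_Icc)
    fix x assume "x \<in> {L..1}"
    show "((\<lambda>x. - (c * (1 - x) ^ Suc k / Suc k)) has_real_derivative c * (1 - x) ^ k) (at x)"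
      by (rule derivative_eq_intros refl | simp)+
    show "0 \<le> c * (1 - x) ^ k" using \<open>x \<in> {L..1}\<close> assms by auto
  qed (use assms in auto)
  finally show ?thesis by simp
qed

lemma nn_integral_unif01_const:
  fixes c L :: real
  assumes "0 \<le> L" "L \<le> 1" "0 \<le> c"
  shows "(\<integral>\<^sup>+z. indicator {L<..} z * ennreal c \<partial>unif01) = ennreal (c * (1 - L))"
  using nn_integral_unif01_power[OF assms, of 0] by simp

lemma measurable_component_unif_prod:
  assumes "i \<in> I"
  shows "(\<lambda>x. x i) \<in> borel_measurable (unif_prod I)"
proof -
  have "measurable (unif_prod I) unif01 = borel_measurable (unif_prod I)"
    by (rule measurable_cong_sets) auto
  then show ?thesis using measurable_component_singleton[OF assms, of "\<lambda>_. unif01"] by simp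
qed

lemma emeasure_unif_prod_insert:
  assumes "finite I" "N \<notin> I" "S \<inter> space (unif_prod (insert N I)) \<in> sets (unif_prod (insert N I))"
  shows "emeasure (unif_prod (insert N I)) (S \<inter> space (unif_prod (insert N I)))
    = (\<integral>\<^sup>+x. \<integral>\<^sup>+z. indicator S (x(N := z)) \<partial>unif01 \<partial>unif_prod I)"
proof -
  let ?S = "S \<inter> space (unif_prod (insert N I))"
  have "emeasure (unif_prod (insert N I)) ?S = (\<integral>\<^sup>+x. indicator ?S x \<partial>unif_prod (insert N I))"
    using assms by simp
  also have "\<dots> = (\<integral>\<^sup>+x. \<integral>\<^sup>+z. indicator ?S (x(N := z)) \<partial>unif01 \<partial>unif_prod I)"
    using assms by (intro unif01.product_nn_integral_insert) auto
  also have "\<dots> = (\<integral>\<^sup>+x. \<integral>\<^sup>+z. indicator S (x(N := z)) \<partial>unif01 \<partial>unif_prod I)"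
    by (intro nn_integral_cong) (auto simp: indicator_def space_PiM PiE_def extensional_def)
  finally show ?thesis .
qed

lemma emeasure_unif_prod_insert_rev:
  assumes "finite I" "N \<notin> I" "S \<inter> space (unif_prod (insert N I)) \<in> sets (unif_prod (insert N I))"
  shows "emeasure (unif_prod (insert N I)) (S \<inter> space (unif_prod (insert N I)))
    = (\<integral>\<^sup>+z. \<integral>\<^sup>+x. indicator S (x(N := z)) \<partial>unif_prod I \<partial>unif01)"
proof -
  let ?S = "S \<inter> space (unif_prod (insert N I))"
  have "emeasure (unif_prod (insert N I)) ?S = (\<integral>\<^sup>+x. indicator ?S x \<partial>unif_prod (insert N I))"
    using assms by simp
  also have "\<dots> = (\<integral>\<^sup>+z. \<integral>\<^sup>+x. indicator ?S (x(N := z)) \<partial>unif_prod I \<partial>unif01)"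
    using assms by (intro unif01.product_nn_integral_insert_rev) auto
  also have "\<dots> = (\<integral>\<^sup>+z. \<integral>\<^sup>+x. indicator S (x(N := z)) \<partial>unif_prod I \<partial>unif01)"
    by (intro nn_integral_cong) (auto simp: indicator_def space_PiM PiE_def extensional_def)
  finally show ?thesis .
qed

section \<open>Numbers at risk and volumes of admissible sets\<close>

definition at_risk :: "(nat \<Rightarrow> real) \<Rightarrow> nat set \<Rightarrow> nat \<Rightarrow> nat" where
  "at_risk y J p = card {q\<in>J. y p \<le> y q}"

lemma at_risk_pos:
  assumes "finite J" "p \<in> J"
  shows "0 < at_risk y J p"
  using assms by (auto simp: at_risk_def card_gt_0_iff)

lemma at_risk_antimono:
  assumes "finite J" "y p \<le> y q"
  shows "at_risk y J q \<le> at_risk y J p"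
  unfolding at_risk_def using assms by (intro card_mono) auto

lemma at_risk_strict_antimono:
  assumes "finite J" "p \<in> J" "y p < y q"
  shows "at_risk y J q < at_risk y J p"
proof -
  have "{r\<in>J. y q \<le> y r} \<subset> {r\<in>J. y p \<le> y r}"
    using assms(2,3) by force
  then show ?thesis
    unfolding at_risk_def using assms(1) by (intro psubset_card_mono) auto
qed

lemma inj_on_at_risk:
  assumes "finite J" "inj_on y J"
  shows "inj_on (at_risk y J) J"
proof (rule inj_onI)
  fix p q assume "p \<in> J" "q \<in> J" "at_risk y J p = at_risk y J q"
  then show "p = q"
    using assms at_risk_strict_antimono[OF assms(1), of p y q] at_risk_strict_antimono[OF assms(1), of q y p]
    by (metis inj_on_contraD less_irrefl linorder_neqE_linordered_idom)
qed

lemma at_risk_insert_min: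
  assumes "finite J" "f \<notin> J" "\<forall>q\<in>J. y f < y q"
  shows "at_risk y (insert f J) f = Suc (card J)"
    and "p \<in> J \<Longrightarrow> at_risk y (insert f J) p = at_risk y J p"
proof -
  have "{q \<in> insert f J. y f \<le> y q} = insert f J"
    using assms(3) by force
  then show "at_risk y (insert f J) f = Suc (card J)"
    using assms(1,2) by (simp add: at_risk_def)
  assume "p \<in> J"
  then have "{q \<in> insert f J. y p \<le> y q} = {q \<in> J. y p \<le> y q}"
    using assms(3) by force
  then show "at_risk y (insert f J) p = at_risk y J p"
    by (simp add: at_risk_def)
qed

definition risk_weight :: "(nat \<Rightarrow> real) \<Rightarrow> (nat \<Rightarrow> bool) \<Rightarrow> nat set \<Rightarrow> real" where
  "risk_weight y \<delta> J = (\<Prod>p\<in>{p\<in>J. \<delta> p}. 1 / real (at_risk y J p))"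

lemma risk_weight_nonneg: "0 \<le> risk_weight y \<delta> J"
  unfolding risk_weight_def by (intro prod_nonneg) auto

lemma risk_weight_insert_min:
  assumes "finite J" "f \<notin> J" "\<forall>q\<in>J. y f < y q"
  shows "risk_weight y \<delta> (insert f J)
    = (if \<delta> f then 1 / Suc (card J) else 1) * risk_weight y \<delta> J"
proof -
  have "(\<Prod>p\<in>{p\<in>J. \<delta> p}. 1 / real (at_risk y (insert f J) p))
      = (\<Prod>p\<in>{p\<in>J. \<delta> p}. 1 / real (at_risk y J p))"
    using at_risk_insert_min(2)[OF assms] by (intro prod.cong) auto
  moreover have "{p \<in> insert f J. \<delta> p} = (if \<delta> f then insert f {p\<in>J. \<delta> p} else {p\<in>J. \<delta> p})"
    by auto
  ultimately show ?thesis
    using assms at_risk_insert_min(1)[OF assms] by (simp add: risk_weight_def)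
qed

text \<open>The admissible u are those with a nonempty fiducial set (see QF_nonempty_iff below). The
  extra lower bound L makes the volume computation recursive: fixing the coordinate of the
  earliest observation leaves an admissible set for the remaining ones.\<close>

definition admissible :: "(nat \<Rightarrow> real) \<Rightarrow> (nat \<Rightarrow> bool) \<Rightarrow> nat set \<Rightarrow> real \<Rightarrow> (nat \<Rightarrow> real) set" where
  "admissible y \<delta> J L = {u. \<forall>q\<in>J. L < u q \<and> (\<delta> q \<longrightarrow> u q \<le> 1)
     \<and> (\<forall>p\<in>J. \<delta> p \<and> y p < y q \<longrightarrow> u p < u q)}"

lemma sets_admissible:
  assumes "finite J"
  shows "admissible y \<delta> J L \<inter> space (unif_prod J) \<in> sets (unif_prod J)"
proof -
  have "admissible y \<delta> J L \<inter> space (unif_prod J) = {u \<in> space (unif_prod J).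
     \<forall>q\<in>J. L < u q \<and> (\<delta> q \<longrightarrow> u q \<le> 1) \<and> (\<forall>p\<in>J. \<delta> p \<and> y p < y q \<longrightarrow> u p < u q)}"
    by (auto simp: admissible_def)
  also have "\<dots> \<in> sets (unif_prod J)"
    using assms by measurable
  finally show ?thesis .
qed

lemma admissible_insert_min:
  assumes "f \<notin> J" "\<forall>q\<in>J. y f < y q"
  shows "x(f := z) \<in> admissible y \<delta> (insert f J) L \<longleftrightarrow>
         L < z \<and> (\<delta> f \<longrightarrow> z \<le> 1) \<and> x \<in> admissible y \<delta> J (if \<delta> f then z else L)"
proof -
  have "q \<in> J \<Longrightarrow> q \<noteq> f \<and> \<not> y q < y f" for q
    using assms by force
  then have "x(f := z) \<in> admissible y \<delta> (insert f J) L \<longleftrightarrow>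
     (L < z \<and> (\<delta> f \<longrightarrow> z \<le> 1) \<and> (\<forall>q\<in>J. \<delta> f \<longrightarrow> z < x q)) \<and> x \<in> admissible y \<delta> J L"
    unfolding admissible_def using assms(2) by auto
  then show ?thesis
    by (auto simp: admissible_def)
qed

lemma admissible_insert:
  assumes "N \<notin> I"
  shows "x(N := z) \<in> admissible (y(N := s)) (\<delta>(N := b)) (insert N I) L \<longleftrightarrow>
     x \<in> admissible y \<delta> I L \<and> L < z \<and> (b \<longrightarrow> z \<le> 1) \<and> (\<forall>p\<in>I. \<delta> p \<and> y p < s \<longrightarrow> x p < z)
       \<and> (b \<longrightarrow> (\<forall>q\<in>I. s < y q \<longrightarrow> z < x q))"
proof -
  have "q \<in> I \<Longrightarrow> q \<noteq> N" for q using assms by auto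
  then show ?thesis
    unfolding admissible_def by (auto simp: Ball_def)
qed

lemma emeasure_admissible_insert_min:
  assumes "finite J" "f \<notin> J" "\<forall>q\<in>J. y f < y q"
  shows "emeasure (unif_prod (insert f J)) (admissible y \<delta> (insert f J) L \<inter> space (unif_prod (insert f J)))
    = (\<integral>\<^sup>+z. indicator {z. L < z \<and> (\<delta> f \<longrightarrow> z \<le> 1)} z *
         emeasure (unif_prod J) (admissible y \<delta> J (if \<delta> f then z else L) \<inter> space (unif_prod J)) \<partial>unif01)"
proof -
  have "emeasure (unif_prod (insert f J)) (admissible y \<delta> (insert f J) L \<inter> space (unif_prod (insert f J)))
    = (\<integral>\<^sup>+z. \<integral>\<^sup>+x. indicator (admissible y \<delta> (insert f J) L) (x(f := z)) \<partial>unif_prod J \<partial>unif01)"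
    using assms by (intro emeasure_unif_prod_insert_rev sets_admissible) auto
  also have "\<dots> = (\<integral>\<^sup>+z. indicator {z. L < z \<and> (\<delta> f \<longrightarrow> z \<le> 1)} z *
         emeasure (unif_prod J) (admissible y \<delta> J (if \<delta> f then z else L) \<inter> space (unif_prod J)) \<partial>unif01)"
  proof (intro nn_integral_cong)
    fix z :: real
    have "(\<integral>\<^sup>+x. indicator (admissible y \<delta> (insert f J) L) (x(f := z)) \<partial>unif_prod J)
      = (\<integral>\<^sup>+x. indicator {z. L < z \<and> (\<delta> f \<longrightarrow> z \<le> 1)} z *
           indicator (admissible y \<delta> J (if \<delta> f then z else L) \<inter> space (unif_prod J)) x \<partial>unif_prod J)"
    proof (intro nn_integral_cong)
      fix x assume "x \<in> space (unif_prod J)"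
      then show "indicator (admissible y \<delta> (insert f J) L) (x(f := z))
        = indicator {z. L < z \<and> (\<delta> f \<longrightarrow> z \<le> 1)} z *
          (indicator (admissible y \<delta> J (if \<delta> f then z else L) \<inter> space (unif_prod J)) x :: ennreal)"
        using admissible_insert_min[of f J y x z \<delta> L] assms(2,3) by (simp add: indicator_def)
    qed
    also have "\<dots> = indicator {z. L < z \<and> (\<delta> f \<longrightarrow> z \<le> 1)} z *
         emeasure (unif_prod J) (admissible y \<delta> J (if \<delta> f then z else L) \<inter> space (unif_prod J))"
      using assms(1) sets_admissible by (subst nn_integral_cmult) auto
    finally show "(\<integral>\<^sup>+x. indicator (admissible y \<delta> (insert f J) L) (x(f := z)) \<partial>unif_prod J) = \<dots>" .
  qed
  finally show ?thesis .
qed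

lemma emeasure_admissible:
  assumes "finite J" "inj_on y J" "0 \<le> L" "L \<le> 1"
  shows "emeasure (unif_prod J) (admissible y \<delta> J L \<inter> space (unif_prod J))
         = ennreal (risk_weight y \<delta> J * (1 - L) ^ card J)"
  using assms
proof (induction "card J" arbitrary: J L)
  case 0
  then have "J = {}" by auto
  then show ?case by (simp add: PiM_empty admissible_def risk_weight_def)
next
  case (Suc k J L)
  then have "J \<noteq> {}" by auto
  then have "Min (y ` J) \<in> y ` J" using Suc.prems(1) by (intro Min_in) auto
  then obtain f where f: "f \<in> J" "y f = Min (y ` J)" by auto
  define J' where "J' = J - {f}"
  have J: "J = insert f J'" "f \<notin> J'" "finite J'" "card J' = k"
    using f Suc.hyps(2) Suc.prems(1) by (auto simp: J'_def)
  have f_min: "\<forall>q\<in>J'. y f < y q"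
  proof
    fix q assume "q \<in> J'"
    have "y f \<le> y q" using \<open>q \<in> J'\<close> f Suc.prems(1) by (simp add: J'_def)
    moreover have "y f \<noteq> y q" using \<open>q \<in> J'\<close> f(1) Suc.prems(2) by (auto simp: J'_def inj_on_def)
    ultimately show "y f < y q" by simp
  qed
  have IH: "emeasure (unif_prod J') (admissible y \<delta> J' L' \<inter> space (unif_prod J'))
      = ennreal (risk_weight y \<delta> J' * (1 - L') ^ k)" if "0 \<le> L'" "L' \<le> 1" for L'
    using Suc.hyps(1)[of J' L'] J(3,4) Suc.prems(2) that by (simp add: J'_def inj_on_diff)
  have "emeasure (unif_prod J) (admissible y \<delta> J L \<inter> space (unif_prod J))
    = (\<integral>\<^sup>+z. indicator {L<..} z *
         ennreal (risk_weight y \<delta> J' * (1 - (if \<delta> f then z else L)) ^ k) \<partial>unif01)"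
    unfolding J(1)
  proof (subst emeasure_admissible_insert_min[OF J(3,2) f_min], intro nn_integral_cong_AE)
    show "AE z in unif01. indicator {z. L < z \<and> (\<delta> f \<longrightarrow> z \<le> 1)} z *
        emeasure (unif_prod J') (admissible y \<delta> J' (if \<delta> f then z else L) \<inter> space (unif_prod J'))
      = indicator {L<..} z * ennreal (risk_weight y \<delta> J' * (1 - (if \<delta> f then z else L)) ^ k)"
      using AE_unif01 by eventually_elim (use IH Suc.prems(3,4) in \<open>auto simp: indicator_def\<close>)
  qed
  also have "\<dots> = ennreal (risk_weight y \<delta> J * (1 - L) ^ card J)"
    using nn_integral_unif01_power[OF Suc.prems(3,4) risk_weight_nonneg, of y \<delta> J' k]
      nn_integral_unif01_const[OF Suc.prems(3,4), of "risk_weight y \<delta> J' * (1 - L) ^ k"]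
      risk_weight_insert_min[OF J(3,2) f_min, of \<delta>] risk_weight_nonneg[of y \<delta> J'] Suc.prems(4) J
    by (simp add: mult_ac)
  finally show ?case .
qed

section \<open>The Kaplan--Meier estimator\<close>

lemma Kbar_eq_at_risk: "Kbar n y (y p) = real (at_risk y {..<n} p)"
proof -
  have "{..<n} \<inter> {i. y p \<le> y i} = {q \<in> {..<n}. y p \<le> y q}" by auto
  then show ?thesis by (simp add: Kbar_def at_risk_def sum.If_cases)
qed

lemma dNbar_at_observation:
  assumes "inj_on y {..<n}" "p < n"
  shows "dNbar n y \<delta> (y p) = (if \<delta> p then 1 else 0)"
proof -
  have "dNbar n y \<delta> (y p) = (\<Sum>i<n. if i = p \<and> \<delta> p then 1 else 0)"
    unfolding dNbar_def Nbar_def Nbar_left_def sum_subtractf[symmetric]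
  proof (rule sum.cong)
    fix i assume "i \<in> {..<n}"
    then have "i \<noteq> p \<Longrightarrow> y i \<noteq> y p" using assms by (auto simp: inj_on_def)
    then show "(if y i \<le> y p \<and> \<delta> i then 1 else 0) - (if y i < y p \<and> \<delta> i then 1 else 0)
        = (if i = p \<and> \<delta> p then 1 else (0::real))" by (cases "i = p") auto
  qed simp
  then show ?thesis using assms(2) by (simp add: sum.delta')
qed

lemma KM_eq_prod_at_risk:
  assumes "inj_on y {..<n}"
  shows "KM n y \<delta> t = (\<Prod>p\<in>{p\<in>{..<n}. \<delta> p \<and> y p \<le> t}. 1 - 1 / real (at_risk y {..<n} p))"
proof -
  have "{u \<in> y ` {..<n}. u \<le> t} = y ` {p\<in>{..<n}. y p \<le> t}" by auto
  moreover have "inj_on y {p\<in>{..<n}. y p \<le> t}" using assms by (auto intro: inj_on_subset)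
  ultimately have "KM n y \<delta> t = (\<Prod>p\<in>{p\<in>{..<n}. y p \<le> t}. 1 - dNbar n y \<delta> (y p) / Kbar n y (y p))"
    unfolding KM_def by (simp add: prod.reindex)
  also have "\<dots> = (\<Prod>p\<in>{p\<in>{..<n}. y p \<le> t}. if \<delta> p then 1 - 1 / real (at_risk y {..<n} p) else 1)"
    using dNbar_at_observation[OF assms] by (intro prod.cong) (auto simp: Kbar_eq_at_risk)
  also have "\<dots> = (\<Prod>p\<in>{p\<in>{..<n}. \<delta> p \<and> y p \<le> t}. 1 - 1 / real (at_risk y {..<n} p))"
    by (subst prod.inter_filter[symmetric]) (auto intro: prod.cong)
  finally show ?thesis .
qed

text \<open>For distinct a_1 < ... < a_k, all at least j, the product telescopes:
  (1 - 1/j) a_1/(a_1+1) ... a_k/(a_k+1) \<le> (1 - 1/a_1) ... (1 - 1/a_k), because a_i/(a_i+1) \<le> 1 - 1/a_(i+1).\<close>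

lemma prod_succ_ratio_le_prod_pred_ratio:
  fixes S :: "nat set"
  assumes "finite S" "\<forall>a\<in>S. j \<le> a" "1 \<le> j"
  shows "(\<Prod>a\<in>S. real a / (real a + 1)) * (1 - 1 / real j) \<le> (\<Prod>a\<in>S. 1 - 1 / real a)"
  using assms
proof (induction S arbitrary: j rule: finite_linorder_min_induct)
  case empty
  then show ?case by simp
next
  case (insert b S)
  have "b \<notin> S" and "j \<le> b" and "1 \<le> b" using insert by auto
  have IH: "(\<Prod>a\<in>S. real a / (real a + 1)) * (1 - 1 / real (Suc b)) \<le> (\<Prod>a\<in>S. 1 - 1 / real a)"
    using insert.IH[of "Suc b"] insert.hyps(2) by (simp add: Suc_le_eq)
  have "(\<Prod>a\<in>insert b S. real a / (real a + 1)) * (1 - 1 / real j)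
      = ((\<Prod>a\<in>S. real a / (real a + 1)) * (1 - 1 / real (Suc b))) * (1 - 1 / real j)"
    using insert.hyps(1) \<open>b \<notin> S\<close> \<open>1 \<le> b\<close> by (simp add: field_simps)
  also have "\<dots> \<le> (\<Prod>a\<in>S. 1 - 1 / real a) * (1 - 1 / real b)"
    using insert.hyps(2) \<open>j \<le> b\<close> \<open>1 \<le> j\<close> IH
    by (intro mult_mono prod_nonneg) (auto simp: field_simps)
  also have "\<dots> = (\<Prod>a\<in>insert b S. 1 - 1 / real a)"
    using insert.hyps(1) \<open>b \<notin> S\<close> by (simp add: mult.commute)
  finally show ?case .
qed

section \<open>The fiducial set\<close>

lemma is_dist_fun_nonneg_bounds:
  assumes "is_dist_fun_nonneg F"
  shows "0 \<le> F x" "F x \<le> 1"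
proof -
  have mono: "mono F" and lim: "(F \<longlongrightarrow> 1) at_top" and neg: "\<forall>x<0. F x = 0"
    using assms by (auto simp: is_dist_fun_nonneg_def)
  show "0 \<le> F x"
    using neg monoD[OF mono, of "min x (-1)" x] by (cases "x < 0") auto
  show "F x \<le> 1"
  proof (rule tendsto_lowerbound[OF lim])
    show "\<forall>\<^sub>F z in at_top. F x \<le> F z"
      using eventually_ge_at_top[of x] by eventually_elim (rule monoD[OF mono])
  qed simp
qed

lemma QF_failure_bounds:
  assumes "F \<in> QF n y \<delta> u" "m < n" "\<delta> m"
  shows "u m \<le> F (y m)" "F (y m) \<le> 1" "\<And>q. q < n \<Longrightarrow> y m < y q \<Longrightarrow> F (y m) < u q"
proof -
  have df: "is_dist_fun_nonneg F"
    and fail: "\<And>i. i < n \<Longrightarrow> \<delta> i \<Longrightarrow> u i \<le> F (y i) \<and> (\<forall>\<epsilon>>0. F (y i - \<epsilon>) < u i)"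
    and cens: "\<And>j. j < n \<Longrightarrow> \<not> \<delta> j \<Longrightarrow> F (y j) < u j"
    using assms(1) by (auto simp: QF_def)
  show "u m \<le> F (y m)" using fail assms(2,3) by auto
  show "F (y m) \<le> 1" using is_dist_fun_nonneg_bounds[OF df] by auto
  fix q assume q: "q < n" "y m < y q"
  show "F (y m) < u q"
  proof (cases "\<delta> q")
    case True
    then show ?thesis using fail[OF q(1)] q(2) by (auto dest: spec[of _ "y q - y m"])
  next
    case False
    have "F (y m) \<le> F (y q)"
      using df q(2) by (auto simp: is_dist_fun_nonneg_def mono_def)
    then show ?thesis using cens[OF q(1) False] by auto
  qed
qed

lemma QF_imp_admissible:
  assumes "F \<in> QF n y \<delta> u"
  shows "u \<in> admissible y \<delta> {..<n} 0"
  unfolding admissible_def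
proof (intro CollectI ballI conjI impI)
  have df: "is_dist_fun_nonneg F"
    and fail: "\<And>i. i < n \<Longrightarrow> \<delta> i \<Longrightarrow> (\<forall>\<epsilon>>0. F (y i - \<epsilon>) < u i)"
    and cens: "\<And>j. j < n \<Longrightarrow> \<not> \<delta> j \<Longrightarrow> F (y j) < u j"
    using assms by (auto simp: QF_def)
  fix q assume q: "q \<in> {..<n}"
  have "F (y q - 1) < u q \<or> F (y q) < u q"
    using fail[of q] cens[of q] q by (cases "\<delta> q") auto
  then show "0 < u q"
    using is_dist_fun_nonneg_bounds(1)[OF df] by (meson le_less_trans)
  show "u q \<le> 1" if "\<delta> q"
    using QF_failure_bounds(1,2)[OF assms _ that] q by auto
  fix p assume "p \<in> {..<n}" "\<delta> p \<and> y p < y q"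
  then show "u p < u q"
    using QF_failure_bounds(1)[OF assms, of p] QF_failure_bounds(3)[OF assms, of p q] q by force
qed

definition step_cdf :: "nat set \<Rightarrow> (nat \<Rightarrow> real) \<Rightarrow> (nat \<Rightarrow> real) \<Rightarrow> real \<Rightarrow> real \<Rightarrow> real" where
  "step_cdf I y v B x = (if B \<le> x then 1 else Max (insert 0 (v ` {r\<in>I. y r \<le> x})))"

lemma step_cdf_ge:
  assumes "finite I" "r \<in> I" "y r \<le> x" "x < B"
  shows "v r \<le> step_cdf I y v B x"
  using assms by (auto simp: step_cdf_def intro: Max_ge)

lemma step_cdf_le:
  assumes "finite I" "x < B" "0 \<le> c" "\<forall>r\<in>I. y r \<le> x \<longrightarrow> v r \<le> c"
  shows "step_cdf I y v B x \<le> c"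
  using assms by (auto simp: step_cdf_def)

lemma step_cdf_less:
  assumes "finite I" "x < B" "0 < c" "\<forall>r\<in>I. y r \<le> x \<longrightarrow> v r < c"
  shows "step_cdf I y v B x < c"
  using assms by (auto simp: step_cdf_def)

lemma step_cdf_eventually_const_right:
  assumes "finite I"
  shows "\<forall>\<^sub>F z in at_right x. step_cdf I y v B z = step_cdf I y v B x"
proof -
  define D where "D = {d \<in> insert B (y ` I). x < d}"
  define b where "b = (if D = {} then x + 1 else Min D)"
  have "finite D" using assms by (auto simp: D_def)
  then have "x < b" and b_le: "\<And>d. d \<in> D \<Longrightarrow> b \<le> d"
    by (auto simp: b_def D_def)
  show ?thesis
    unfolding eventually_at_right_field
  proof (intro exI[of _ b] conjI allI impI \<open>x < b\<close>)
    fix z assume z: "x < z" "z < b"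
    have "B \<le> z \<longleftrightarrow> B \<le> x"
      using b_le[of B] z by (force simp: D_def)
    moreover have "{r\<in>I. y r \<le> z} = {r\<in>I. y r \<le> x}"
    proof -
      have "y r \<le> x" if "r \<in> I" "y r \<le> z" for r
        using b_le[of "y r"] that z by (force simp: D_def)
      then show ?thesis using z by auto
    qed
    ultimately show "step_cdf I y v B z = step_cdf I y v B x"
      by (simp add: step_cdf_def)
  qed
qed

lemma is_dist_fun_nonneg_step_cdf:
  assumes "finite I" "0 < B" "\<forall>r\<in>I. 0 \<le> y r \<and> y r < B \<and> v r \<le> 1"
  shows "is_dist_fun_nonneg (step_cdf I y v B)"
  unfolding is_dist_fun_nonneg_def
proof (intro conjI allI impI)
  show "mono (step_cdf I y v B)"
  proof (rule monoI)
    fix x x' :: real assume "x \<le> x'"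
    then have "v ` {r\<in>I. y r \<le> x} \<subseteq> v ` {r\<in>I. y r \<le> x'}" by auto
    then have "Max (insert 0 (v ` {r\<in>I. y r \<le> x})) \<le> Max (insert 0 (v ` {r\<in>I. y r \<le> x'}))"
      using assms(1) by (intro Max_mono) auto
    then show "step_cdf I y v B x \<le> step_cdf I y v B x'"
      using \<open>x \<le> x'\<close> step_cdf_le[OF assms(1), of x B 1 y v] assms(3) by (auto simp: step_cdf_def)
  qed
  fix x :: real
  show "continuous (at_right x) (step_cdf I y v B)"
    unfolding continuous_within
    using step_cdf_eventually_const_right[OF assms(1)] by (rule tendsto_eventually)
  show "(step_cdf I y v B \<longlongrightarrow> 1) at_top"
    by (rule tendsto_eventually, use eventually_ge_at_top[of B] in eventually_elim)
      (simp add: step_cdf_def)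
  assume "x < 0"
  moreover have "{r\<in>I. y r \<le> x} = {}"
    using assms(3) \<open>x < 0\<close> by force
  ultimately show "step_cdf I y v B x = 0"
    using assms(2) unfolding step_cdf_def by (metis Max_singleton image_empty not_less order.strict_trans)
qed

lemma step_cdf_in_QF:
  assumes no_ties: "inj_on y {..<n}" and y: "\<forall>i<n. 0 \<le> y i \<and> y i < B" and "0 < B"
    and u: "\<forall>i<n. 0 < u i" and v: "\<forall>i<n. \<delta> i \<longrightarrow> u i \<le> v i \<and> v i \<le> 1"
    and v_less: "\<And>r q. r < n \<Longrightarrow> \<delta> r \<Longrightarrow> q < n \<Longrightarrow> y r < y q \<Longrightarrow> v r < u q"
  shows "step_cdf {r. r < n \<and> \<delta> r} y v B \<in> QF n y \<delta> u"
proof -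
  let ?I = "{r. r < n \<and> \<delta> r}" and ?F = "step_cdf {r. r < n \<and> \<delta> r} y v B"
  have "is_dist_fun_nonneg ?F"
    using y v \<open>0 < B\<close> by (intro is_dist_fun_nonneg_step_cdf) auto
  moreover have "u i \<le> ?F (y i) \<and> (\<forall>\<epsilon>>0. ?F (y i - \<epsilon>) < u i)" if "i < n" "\<delta> i" for i
  proof (intro conjI allI impI)
    show "u i \<le> ?F (y i)"
      using step_cdf_ge[of ?I i y "y i" B v] that y v by force
    fix \<epsilon> :: real assume "0 < \<epsilon>"
    then show "?F (y i - \<epsilon>) < u i"
      using that y u v_less[of _ i] by (intro step_cdf_less) auto
  qed
  moreover have "?F (y j) < u j" if "j < n" "\<not> \<delta> j" for j
  proof -
    have "y r < y j" if "r \<in> ?I" "y r \<le> y j" for r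
      using that \<open>j < n\<close> \<open>\<not> \<delta> j\<close> no_ties by (auto simp: inj_on_def order.order_iff_strict)
    then show ?thesis
      using that y u v_less[of _ j] by (intro step_cdf_less) auto
  qed
  ultimately show ?thesis
    unfolding QF_def by blast
qed

lemma QF_exists_value:
  assumes no_ties: "inj_on y {..<n}" and nonneg: "\<forall>i<n. 0 \<le> y i"
    and u: "u \<in> admissible y \<delta> {..<n} 0" and m: "m < n" "\<delta> m"
    and a: "u m \<le> a" "a \<le> 1" "\<forall>q<n. y m < y q \<longrightarrow> a < u q"
  shows "\<exists>F\<in>QF n y \<delta> u. F (y m) = a"
proof -
  define B where "B = Max (insert 0 (y ` {..<n})) + 1"
  define v where "v = u(m := a)"
  have u_props: "0 < u q" "\<delta> q \<Longrightarrow> u q \<le> 1" "\<forall>p<n. \<delta> p \<and> y p < y q \<longrightarrow> u p < u q"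
    if "q < n" for q
    using u that by (auto simp: admissible_def)
  have "0 \<le> Max (insert 0 (y ` {..<n}))" "\<forall>q<n. y q \<le> Max (insert 0 (y ` {..<n}))"
    by (simp_all add: Max_ge)
  then have B: "0 < B" "\<forall>q<n. y q < B"
    unfolding B_def by (auto simp: less_eq_real_def)
  have v_less: "v r < u q" if "r < n" "\<delta> r" "q < n" "y r < y q" for r q
    using that a(3) u_props(3)[of q] by (auto simp: v_def)
  have F: "step_cdf {r. r < n \<and> \<delta> r} y v B \<in> QF n y \<delta> u"
    using B nonneg u_props(1,2) a(1,2) v_less
    by (intro step_cdf_in_QF[OF no_ties]) (auto simp: v_def)
  have "v r \<le> a" if "r < n" "\<delta> r" "y r \<le> y m" for r
  proof (cases "r = m")
    case False
    then have "y r < y m" using that m(1) no_ties by (auto simp: inj_on_def order.order_iff_strict)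
    then show ?thesis using v_less[OF that(1,2) m(1)] a(1) False by (simp add: v_def)
  qed (simp add: v_def)
  then have "step_cdf {r. r < n \<and> \<delta> r} y v B (y m) = a"
    using B m u_props(1)[OF m(1)] a(1) step_cdf_ge[of "{r. r < n \<and> \<delta> r}" m y "y m" B v]
    by (intro antisym step_cdf_le) (auto simp: v_def)
  then show ?thesis using F by blast
qed

section \<open>Fiducial expectations at a failure time\<close>

locale failure_time =
  fixes n :: nat and y :: "nat \<Rightarrow> real" and \<delta> :: "nat \<Rightarrow> bool" and m :: nat
  assumes no_ties: "inj_on y {..<n}" and nonneg: "\<forall>i<n. 0 \<le> y i"
    and failure: "m < n" "\<delta> m"
begin

abbreviation adm :: "(nat \<Rightarrow> real) set" where
  "adm \<equiv> admissible y \<delta> {..<n} 0"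

definition later :: "nat set" where
  "later = {q\<in>{..<n}. y m < y q}"

definition next_bound :: "(nat \<Rightarrow> real) \<Rightarrow> real" where
  "next_bound u = Min (insert 1 (u ` later))"

lemma finite_later: "finite later"
  by (simp add: later_def)

lemma admissible_failure_bounds:
  assumes "u \<in> adm"
  shows "0 < u m" "u m \<le> 1" "\<And>q. q \<in> later \<Longrightarrow> u m < u q" "u m \<le> next_bound u" "next_bound u \<le> 1"
proof -
  show "0 < u m" "u m \<le> 1" "\<And>q. q \<in> later \<Longrightarrow> u m < u q"
    using assms failure by (auto simp: admissible_def later_def)
  then show "u m \<le> next_bound u"
    unfolding next_bound_def using finite_later by (auto intro!: Min.boundedI less_imp_le)
  show "next_bound u \<le> 1"
    unfolding next_bound_def using finite_later by (auto intro!: Min_le)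
qed

lemma QF_nonempty_iff: "QF n y \<delta> u \<noteq> {} \<longleftrightarrow> u \<in> adm"
proof
  assume "u \<in> adm"
  then show "QF n y \<delta> u \<noteq> {}"
    using QF_exists_value[where \<delta>=\<delta> and m=m and u=u and a="u m", OF no_ties nonneg _ failure] admissible_failure_bounds(2,3)
    by (auto simp: later_def)
qed (auto intro: QF_imp_admissible)

lemma S_upper_at_failure:
  "S_upper n y \<delta> u (y m) = (if u \<in> adm then 1 - u m else 1 - Inf {})"
proof (cases "u \<in> adm")
  case True
  then obtain F where "F \<in> QF n y \<delta> u" "F (y m) = u m"
    using QF_exists_value[OF no_ties nonneg True failure, of "u m"] admissible_failure_bounds[OF True]
    by (auto simp: later_def)
  then have "Inf ((\<lambda>F. F (y m)) ` QF n y \<delta> u) = u m"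
    by (intro cInf_eq_minimum) (auto intro: QF_failure_bounds(1)[where \<delta>=\<delta> and m=m, OF _ failure] image_eqI[where x=F])
  then show ?thesis using True by (simp add: S_upper_def)
next
  case False
  then have "QF n y \<delta> u = {}" using QF_nonempty_iff by blast
  then show ?thesis using False by (simp add: S_upper_def)
qed

lemma S_lower_at_failure:
  assumes u: "u \<in> adm"
  shows "0 \<le> S_lower n y \<delta> u (y m)" "S_lower n y \<delta> u (y m) \<le> 1 - next_bound u"
proof -
  let ?X = "(\<lambda>F. F (y m)) ` QF n y \<delta> u"
  note bounds = admissible_failure_bounds[OF u]
  have mem: "w \<in> ?X" if "u m \<le> w" "w \<le> 1" "\<forall>q<n. y m < y q \<longrightarrow> w < u q" for w
    using QF_exists_value[OF no_ties nonneg u failure that] by force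
  have "u m \<in> ?X"
    using mem bounds(2,3) by (auto simp: later_def)
  moreover have le1: "x \<le> 1" if "x \<in> ?X" for x
    using that QF_failure_bounds(2)[where \<delta>=\<delta> and m=m, OF _ failure] by auto
  ultimately have bdd: "bdd_above ?X" and "Sup ?X \<le> 1"
    by (auto simp: bdd_above_def intro!: cSup_least)
  then show "0 \<le> S_lower n y \<delta> u (y m)" by (simp add: S_lower_def)
  have "next_bound u \<le> u q" if "q < n" "y m < y q" for q
    using that finite_later unfolding next_bound_def by (intro Min_le) (auto simp: later_def)
  then have "w \<le> Sup ?X" if "u m < w" "w < next_bound u" for w
    using that bounds(5) by (intro cSup_upper[OF mem bdd]) force+
  then have "next_bound u \<le> Sup ?X"
    using bounds(4) \<open>u m \<in> ?X\<close> bdd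
    by (cases "u m < next_bound u") (auto intro: dense_le_bounded cSup_upper)
  then show "S_lower n y \<delta> u (y m) \<le> 1 - next_bound u" by (simp add: S_lower_def)
qed

lemma measurable_next_bound: "next_bound \<in> borel_measurable (unif_prod {..<n})"
proof (cases "later = {}")
  case True
  then have "next_bound = (\<lambda>_. 1)" by (simp add: next_bound_def fun_eq_iff)
  then show ?thesis by simp
next
  case False
  have "later \<subseteq> {..<n}" by (auto simp: later_def)
  then have "(\<lambda>u. Min ((\<lambda>i. u i) ` later)) \<in> borel_measurable (unif_prod {..<n})"
    using False finite_later
    by (intro borel_measurable_Min) (auto intro!: measurable_component_unif_prod)
  moreover have "next_bound = (\<lambda>u. min 1 (Min ((\<lambda>i. u i) ` later)))"
    using False finite_later by (simp add: next_bound_def Min_insert fun_eq_iff)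
  ultimately show ?thesis by simp
qed

text \<open>Any time strictly between y m and the next observation would serve as phantom_time.\<close>

definition phantom_time :: real where
  "phantom_time = (if later = {} then y m + 1 else (y m + Min (y ` later)) / 2)"

abbreviation phantom_weight :: "bool \<Rightarrow> real" where
  "phantom_weight b \<equiv> risk_weight (y(n := phantom_time)) (\<delta>(n := b)) (insert n {..<n})"

lemma phantom_time_between:
  assumes "q < n"
  shows "y q \<noteq> phantom_time" "y q < phantom_time \<longleftrightarrow> y q \<le> y m" "phantom_time < y q \<longleftrightarrow> y m < y q"
proof -
  have "y m < phantom_time \<and> (\<forall>q\<in>later. phantom_time < y q)"
  proof (cases "later = {}")
    case False
    then have "Min (y ` later) \<in> y ` later" using finite_later by (intro Min_in) auto
    then have "y m < Min (y ` later)" by (auto simp: later_def)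
    moreover have "Min (y ` later) \<le> y q" if "q \<in> later" for q
      using that finite_later by simp
    ultimately show ?thesis using False by (fastforce simp: phantom_time_def)
  qed (simp add: phantom_time_def)
  then show "y q \<noteq> phantom_time" "y q < phantom_time \<longleftrightarrow> y q \<le> y m" "phantom_time < y q \<longleftrightarrow> y m < y q"
    using assms by (cases "q \<in> later"; force simp: later_def)+
qed

lemma inj_on_phantom: "inj_on (y(n := phantom_time)) (insert n {..<n})"
  using no_ties phantom_time_between(1) unfolding inj_on_def
  by (metis fun_upd_other fun_upd_same insert_iff lessThan_iff)

lemma admissible_phantom_iff:
  assumes "x \<in> adm"
  shows "x(n := z) \<in> admissible (y(n := phantom_time)) (\<delta>(n := b)) (insert n {..<n}) 0 \<longleftrightarrow>
    x m < z \<and> (b \<longrightarrow> z \<le> 1 \<and> (\<forall>q\<in>later. z < x q))"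
proof -
  have "(\<forall>p<n. \<delta> p \<and> y p < phantom_time \<longrightarrow> x p < z) \<longleftrightarrow> x m < z"
  proof
    assume "x m < z"
    moreover have "x p \<le> x m" if "p < n" "\<delta> p" "y p < phantom_time" for p
      using that assms no_ties failure phantom_time_between(2)[of p]
      by (cases "p = m") (auto simp: admissible_def inj_on_def order.order_iff_strict)
    ultimately show "\<forall>p<n. \<delta> p \<and> y p < phantom_time \<longrightarrow> x p < z"
      by fastforce
  qed (use failure phantom_time_between(2) in auto)
  moreover have "0 < x m" using admissible_failure_bounds(1)[OF assms] .
  ultimately show ?thesis
    using assms phantom_time_between(3) admissible_insert[of n "{..<n}" x z y phantom_time \<delta> b 0]
    by (auto simp: later_def)
qed

lemma phantom_weight_eq_nn_integral:
  "ennreal (phantom_weight b) = (\<integral>\<^sup>+x. \<integral>\<^sup>+z.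
     indicator (admissible (y(n := phantom_time)) (\<delta>(n := b)) (insert n {..<n}) 0) (x(n := z)) \<partial>unif01 \<partial>unif_prod {..<n})"
  using emeasure_admissible[OF _ inj_on_phantom, of 0 "\<delta>(n := b)"]
  by (simp add: emeasure_unif_prod_insert sets_admissible)

lemma nn_integral_censored_phantom:
  "(\<integral>\<^sup>+x. ennreal (1 - x m) * indicator (adm \<inter> space (unif_prod {..<n})) x \<partial>unif_prod {..<n})
   = ennreal (phantom_weight False)"
proof -
  let ?A = "admissible (y(n := phantom_time)) (\<delta>(n := False)) (insert n {..<n}) 0"
  have "ennreal (phantom_weight False) = (\<integral>\<^sup>+x. \<integral>\<^sup>+z. indicator ?A (x(n := z)) \<partial>unif01 \<partial>unif_prod {..<n})"
    by (rule phantom_weight_eq_nn_integral)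
  also have "\<dots> = (\<integral>\<^sup>+x. ennreal (1 - x m) * indicator (adm \<inter> space (unif_prod {..<n})) x \<partial>unif_prod {..<n})"
  proof (intro nn_integral_cong)
    fix x :: "nat \<Rightarrow> real" assume "x \<in> space (unif_prod {..<n})"
    show "(\<integral>\<^sup>+z. indicator ?A (x(n := z)) \<partial>unif01) = ennreal (1 - x m) * indicator (adm \<inter> space (unif_prod {..<n})) x"
    proof (cases "x \<in> adm")
      case True
      then have "(\<integral>\<^sup>+z. indicator ?A (x(n := z)) \<partial>unif01) = (\<integral>\<^sup>+z. indicator {x m<..} z * ennreal 1 \<partial>unif01)"
        by (intro nn_integral_cong) (simp add: admissible_phantom_iff indicator_def)
      also have "\<dots> = ennreal (1 - x m)"
        using nn_integral_unif01_const[of "x m" 1] admissible_failure_bounds[OF True] by simp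
      finally show ?thesis using True \<open>x \<in> space _\<close> by simp
    qed (simp add: admissible_insert indicator_def)
  qed
  finally show ?thesis ..
qed

lemma nn_integral_failed_phantom:
  "(\<integral>\<^sup>+x. ennreal (next_bound x - x m) * indicator (adm \<inter> space (unif_prod {..<n})) x \<partial>unif_prod {..<n})
   = ennreal (phantom_weight True)"
proof -
  let ?A = "admissible (y(n := phantom_time)) (\<delta>(n := True)) (insert n {..<n}) 0"
  have "ennreal (phantom_weight True) = (\<integral>\<^sup>+x. \<integral>\<^sup>+z. indicator ?A (x(n := z)) \<partial>unif01 \<partial>unif_prod {..<n})"
    by (rule phantom_weight_eq_nn_integral)
  also have "\<dots> = (\<integral>\<^sup>+x. ennreal (next_bound x - x m) * indicator (adm \<inter> space (unif_prod {..<n})) x \<partial>unif_prod {..<n})"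
  proof (intro nn_integral_cong)
    fix x :: "nat \<Rightarrow> real" assume "x \<in> space (unif_prod {..<n})"
    show "(\<integral>\<^sup>+z. indicator ?A (x(n := z)) \<partial>unif01)
      = ennreal (next_bound x - x m) * indicator (adm \<inter> space (unif_prod {..<n})) x"
    proof (cases "x \<in> adm")
      case True
      have next_bound_iff: "z < next_bound x \<longleftrightarrow> z \<le> 1 \<and> (\<forall>q\<in>later. z < x q)" if "z < 1" for z
        using that finite_later by (auto simp: next_bound_def)
      have "AE z in unif01. indicator ?A (x(n := z)) = (indicator {x m<..<next_bound x} z :: ennreal)"
        using AE_unif01 by eventually_elim
          (simp add: admissible_phantom_iff[OF True] next_bound_iff indicator_def)
      then have "(\<integral>\<^sup>+z. indicator ?A (x(n := z)) \<partial>unif01) = (\<integral>\<^sup>+z. indicator {x m<..<next_bound x} z \<partial>unif01)"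
        by (rule nn_integral_cong_AE)
      also have "\<dots> = ennreal (next_bound x - x m)"
        using nn_integral_unif01_interval admissible_failure_bounds[OF True] by simp
      finally show ?thesis using True \<open>x \<in> space _\<close> by simp
    qed (simp add: admissible_insert indicator_def)
  qed
  finally show ?thesis ..
qed

abbreviation risk :: "nat \<Rightarrow> real" where
  "risk p \<equiv> real (at_risk y {..<n} p)"

definition failures_upto :: "nat set" where
  "failures_upto = {p\<in>{..<n}. \<delta> p \<and> y p \<le> y m}"

lemma at_risk_phantom:
  "p < n \<Longrightarrow> at_risk (y(n := phantom_time)) (insert n {..<n}) p
     = at_risk y {..<n} p + (if y p \<le> y m then 1 else 0)"
  "at_risk (y(n := phantom_time)) (insert n {..<n}) n = at_risk y {..<n} m"
proof -
  assume "p < n"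
  then have "{q\<in>insert n {..<n}. (y(n := phantom_time)) p \<le> (y(n := phantom_time)) q}
      = (if y p \<le> y m then insert n {q\<in>{..<n}. y p \<le> y q} else {q\<in>{..<n}. y p \<le> y q})"
    using phantom_time_between(1,2)[of p] by (auto simp: less_le)
  then show "at_risk (y(n := phantom_time)) (insert n {..<n}) p
     = at_risk y {..<n} p + (if y p \<le> y m then 1 else 0)"
    by (simp add: at_risk_def)
next
  have "{q\<in>insert n {..<n}. phantom_time \<le> (y(n := phantom_time)) q} = insert n later"
    using phantom_time_between(1,3) by (force simp: later_def)
  moreover have "{q\<in>{..<n}. y m \<le> y q} = insert m later"
    using failure no_ties by (auto simp: later_def inj_on_def order.order_iff_strict)
  moreover have "n \<notin> later" "m \<notin> later" by (auto simp: later_def)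
  ultimately show "at_risk (y(n := phantom_time)) (insert n {..<n}) n = at_risk y {..<n} m"
    using finite_later by (simp add: at_risk_def)
qed

lemma risk_weight_censored_phantom:
  "phantom_weight False
   = risk_weight y \<delta> {..<n} * (\<Prod>p\<in>failures_upto. risk p / (risk p + 1))"
proof -
  have "{p\<in>insert n {..<n}. (\<delta>(n := False)) p} = {p\<in>{..<n}. \<delta> p}" by auto
  then have "phantom_weight False
      = (\<Prod>p\<in>{p\<in>{..<n}. \<delta> p}. 1 / risk p * (if y p \<le> y m then risk p / (risk p + 1) else 1))"
    unfolding risk_weight_def
  proof (intro prod.cong refl)
    fix p assume "p \<in> {p\<in>{..<n}. \<delta> p}"
    then have "0 < risk p" using at_risk_pos[of "{..<n}" p y] by simp
    then show "1 / real (at_risk (y(n := phantom_time)) (insert n {..<n}) p)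
      = 1 / risk p * (if y p \<le> y m then risk p / (risk p + 1) else 1)"
      using \<open>p \<in> _\<close> by (simp add: at_risk_phantom)
  qed
  also have "\<dots> = risk_weight y \<delta> {..<n} * (\<Prod>p\<in>{p\<in>{..<n}. \<delta> p}. if y p \<le> y m then risk p / (risk p + 1) else 1)"
    by (simp only: risk_weight_def prod.distrib)
  also have "(\<Prod>p\<in>{p\<in>{..<n}. \<delta> p}. if y p \<le> y m then risk p / (risk p + 1) else 1)
      = (\<Prod>p\<in>failures_upto. risk p / (risk p + 1))"
    by (subst prod.inter_filter[symmetric]) (auto simp: failures_upto_def intro: prod.cong)
  finally show ?thesis .
qed

lemma risk_weight_failed_phantom:
  "phantom_weight True
   = phantom_weight False / risk m"
proof -
  have "{p\<in>insert n {..<n}. (\<delta>(n := True)) p} = insert n {p\<in>insert n {..<n}. (\<delta>(n := False)) p}"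
    by auto
  then show ?thesis
    by (simp add: risk_weight_def at_risk_phantom(2) prod.insert)
qed

lemma risk_weight_pos: "0 < risk_weight y \<delta> {..<n}"
  unfolding risk_weight_def using at_risk_pos[of "{..<n}"] by (intro prod_pos) auto

lemma KM_at_failure: "KM n y \<delta> (y m) = (\<Prod>p\<in>failures_upto. 1 - 1 / risk p)"
  unfolding failures_upto_def by (rule KM_eq_prod_at_risk[OF no_ties])

lemma KM_le_prod_ratio: "KM n y \<delta> (y m) \<le> (\<Prod>p\<in>failures_upto. risk p / (risk p + 1))"
  unfolding KM_at_failure
proof (rule prod_mono)
  fix p assume "p \<in> failures_upto"
  then have "1 \<le> risk p" using at_risk_pos[of "{..<n}" p y] by (simp add: failures_upto_def)
  then show "0 \<le> 1 - 1 / risk p \<and> 1 - 1 / risk p \<le> risk p / (risk p + 1)"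
    by (auto simp: field_simps)
qed

lemma prod_ratio_le_KM:
  "(\<Prod>p\<in>failures_upto. risk p / (risk p + 1)) * (1 - 1 / risk m) \<le> KM n y \<delta> (y m)"
proof -
  have inj: "inj_on (at_risk y {..<n}) failures_upto"
    using inj_on_at_risk[OF _ no_ties] by (rule inj_on_subset) (auto simp: failures_upto_def)
  have "(\<Prod>a\<in>at_risk y {..<n} ` failures_upto. real a / (real a + 1)) * (1 - 1 / risk m)
      \<le> (\<Prod>a\<in>at_risk y {..<n} ` failures_upto. 1 - 1 / real a)"
    using failure at_risk_pos[of "{..<n}" m y]
    by (intro prod_succ_ratio_le_prod_pred_ratio) (auto simp: failures_upto_def intro: at_risk_antimono)
  then show ?thesis
    unfolding KM_at_failure using inj by (simp add: prod.reindex)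
qed

lemma fiducial_eq_uniform_measure:
  "fiducial n y \<delta> = uniform_measure (unif_prod {..<n}) (adm \<inter> space (unif_prod {..<n}))"
proof -
  have "{u \<in> space (unif_prod {..<n}). QF n y \<delta> u \<noteq> {}} = adm \<inter> space (unif_prod {..<n})"
    using QF_nonempty_iff by auto
  then show ?thesis by (simp add: fiducial_def unif_cube_def)
qed

lemma emeasure_adm: "emeasure (unif_prod {..<n}) (adm \<inter> space (unif_prod {..<n})) = ennreal (risk_weight y \<delta> {..<n})"
  using emeasure_admissible[of "{..<n}" y 0 \<delta>] no_ties by simp

lemma integral_S_upper:
  "(\<integral>u. S_upper n y \<delta> u (y m) \<partial>fiducial n y \<delta>) = (\<Prod>p\<in>failures_upto. risk p / (risk p + 1))"
proof -
  let ?M = "unif_prod {..<n}" and ?A = "adm \<inter> space (unif_prod {..<n})"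
  have [measurable]: "(\<lambda>u. u m) \<in> borel_measurable ?M"
    using failure by (intro measurable_component_unif_prod) simp
  have "(\<lambda>u. if u \<in> adm then 1 - u m else 1 - Inf {}) \<in> borel_measurable ?M"
    using sets_admissible by (intro measurable_If_set) auto
  then have "(\<lambda>u. S_upper n y \<delta> u (y m)) \<in> borel_measurable ?M"
    by (simp add: S_upper_at_failure)
  moreover have "(\<integral>\<^sup>+u. ennreal (S_upper n y \<delta> u (y m)) * indicator ?A u \<partial>?M)
      = ennreal (phantom_weight False)"
    by (subst nn_integral_censored_phantom[symmetric], intro nn_integral_cong)
      (simp add: S_upper_at_failure indicator_def)
  ultimately have "(\<integral>u. S_upper n y \<delta> u (y m) \<partial>uniform_measure ?M ?A)
      = phantom_weight False / risk_weight y \<delta> {..<n}"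
    using admissible_failure_bounds(2) risk_weight_pos
    by (intro integral_uniform_measure_eq sets_admissible emeasure_adm risk_weight_nonneg)
      (auto simp: S_upper_at_failure)
  then show ?thesis
    using risk_weight_pos by (simp add: fiducial_eq_uniform_measure risk_weight_censored_phantom)
qed

lemma nn_integral_one_minus_next_bound:
  "(\<integral>\<^sup>+u. ennreal (1 - next_bound u) * indicator (adm \<inter> space (unif_prod {..<n})) u \<partial>unif_prod {..<n})
   = ennreal (phantom_weight False
       - phantom_weight True)"
proof -
  let ?M = "unif_prod {..<n}" and ?A = "adm \<inter> space (unif_prod {..<n})"
  define I where "I = (\<integral>\<^sup>+u. ennreal (1 - next_bound u) * indicator ?A u \<partial>?M)"
  have [measurable]: "(\<lambda>u. u m) \<in> borel_measurable ?M" "next_bound \<in> borel_measurable ?M"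
    using failure measurable_next_bound by (auto intro: measurable_component_unif_prod)
  have [measurable]: "?A \<in> sets ?M" by (rule sets_admissible) simp
  have "ennreal (phantom_weight False) = (\<integral>\<^sup>+u. ennreal (1 - next_bound u) * indicator ?A u
      + ennreal (next_bound u - u m) * indicator ?A u \<partial>?M)"
    unfolding nn_integral_censored_phantom[symmetric] using admissible_failure_bounds(4,5)
    by (intro nn_integral_cong) (auto simp: indicator_def simp flip: ennreal_plus)
  also have "\<dots> = I + ennreal (phantom_weight True)"
    unfolding I_def nn_integral_failed_phantom[symmetric] by (rule nn_integral_add) auto
  finally have sum: "ennreal (phantom_weight False) = I + ennreal (phantom_weight True)" .
  then obtain l where "I = ennreal l" "0 \<le> l"
    by (cases I) (auto simp: top_add)
  moreover have "phantom_weight False = l + phantom_weight True"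
    using sum \<open>I = ennreal l\<close> \<open>0 \<le> l\<close> risk_weight_nonneg[of "y(n := phantom_time)"]
    by (simp flip: ennreal_plus)
  ultimately have "I = ennreal (phantom_weight False - phantom_weight True)" by simp
  then show ?thesis by (simp add: I_def)
qed

lemma integral_S_lower_le:
  "(\<integral>u. S_lower n y \<delta> u (y m) \<partial>fiducial n y \<delta>)
     \<le> (\<Prod>p\<in>failures_upto. risk p / (risk p + 1)) * (1 - 1 / risk m)"
proof -
  let ?M = "unif_prod {..<n}" and ?A = "adm \<inter> space (unif_prod {..<n})"
  have "1 \<le> risk m"
    using at_risk_pos[of "{..<n}" m y] failure by simp
  then have "phantom_weight False \<le> risk m * phantom_weight False"
    using mult_right_mono[OF \<open>1 \<le> risk m\<close> risk_weight_nonneg] by simp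
  then have "0 \<le> phantom_weight False - phantom_weight True"
    using \<open>1 \<le> risk m\<close> by (simp add: risk_weight_failed_phantom field_simps)
  then have "(\<integral>u. S_lower n y \<delta> u (y m) \<partial>uniform_measure ?M ?A)
      \<le> (phantom_weight False - phantom_weight True) / risk_weight y \<delta> {..<n}"
    using S_lower_at_failure measurable_next_bound risk_weight_pos
    by (intro integral_uniform_measure_le[where f = "\<lambda>u. 1 - next_bound u"] sets_admissible
        emeasure_adm nn_integral_one_minus_next_bound) auto
  also have "\<dots> = (\<Prod>p\<in>failures_upto. risk p / (risk p + 1)) * (1 - 1 / risk m)"
    using risk_weight_pos
    by (simp add: risk_weight_failed_phantom risk_weight_censored_phantom field_simps)
  finally show ?thesis by (simp add: fiducial_eq_uniform_measure)
qed

end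

theorem lemma2:
  fixes n :: nat and y :: "nat \<Rightarrow> real" and \<delta> :: "nat \<Rightarrow> bool" and t :: real
  assumes no_ties: "inj_on y {..<n}"
    and nonneg: "\<forall>i<n. 0 \<le> y i"
    and failure: "\<exists>i<n. \<delta> i \<and> t = y i"
  shows "(\<integral>u. S_lower n y \<delta> u t \<partial>fiducial n y \<delta>) \<le> KM n y \<delta> t
       \<and> KM n y \<delta> t \<le> (\<integral>u. S_upper n y \<delta> u t \<partial>fiducial n y \<delta>)"
proof -
  obtain m where "m < n" "\<delta> m" and t: "t = y m"
    using failure by blast
  then interpret failure_time n y \<delta> m
    using no_ties nonneg by unfold_locales
  show ?thesis
    unfolding t using integral_S_lower_le prod_ratio_le_KM KM_le_prod_ratio integral_S_upper
    by linarith
qed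

end
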